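(* In the setting described in the context, if Method 2 stops at iteration $k$ (i.e. $x^{k+1}=x^k$), then $x^k\in\operatorname{zer}(A+B)$.
   Context: Let $\mathcal H$ be a real Hilbert space with inner product $\langle\cdot,\cdot\rangle$ and norm $\|\cdot\|$. Let $A_1:\mathcal H\to\mathcal H$ be $\beta$-cocoercive for some $\beta>0$ (i.e. $\langle A_1x-A_1y,x-y\rangle\ge\beta\|A_1x-A_1y\|^2$ for all $x,y$), let $A_2:\mathcal H\to\mathcal H$ be maximally monotone and uniformly continuous, let $B:\mathcal H\rightrightarrows\mathcal H$ be maximally monotone, and set $A:=A_1+A_2$. Assume $\operatorname{zer}(A+B):=\{x:0\in Ax+Bx\}\neq\emptyset$. $J_{\alpha B}:=(I+\alpha B)^{-1}$ for $\alpha>0$, and $P_C$ denotes the orthogonal projection onto a nonempty closed convex set $C$. Fix $\theta,\delta\in(0,1)$, $\bar\delta>0$ with $1-\delta-\bar\delta>0$, and $\alpha_{-1}>0$ with $\alpha_{-1}\le4\beta\bar\delta$. Conceptual Algorithm: pick $x^0\in\mathcal H$. Given $x^k$ and $\alpha_{k-1}$, for $j\in\mathbb N$ let $\bar x^k_j:=J_{\alpha_{k-1}\theta^jB}(x^k-\alpha_{k-1}\theta^jAx^k)$ and let $j(k)$ be the smallest $j\in\mathbb N$ with $\alpha_{k-1}\theta^j\langle A_2x^k-A_2\bar x^k_j,x^k-\bar x^k_j\rangle\le\delta\|x^k-\bar x^k_j\|^2$. Set $\alpha_k:=\alpha_{k-1}\theta^{j(k)}$, $\bar x^k:=J_{\alpha_kB}(x^k-\alpha_kAx^k)$,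 $r_k:=\frac{\bar\delta}{\alpha_k}\|x^k-\bar x^k\|^2$, $T_k:=\{x\in\mathcal H:\langle \frac{x^k-\bar x^k}{\alpha_k}-(A_2x^k-A_2\bar x^k),x-\bar x^k\rangle\le r_k\}$ and $\Gamma_k:=\{x\in\mathcal H:\langle x^0-x^k,x-x^k\rangle\le0\}$. Method 2 sets $x^{k+1}:=P_{T_k\cap\Gamma_k}(x^0)$ and stops if $x^{k+1}=x^k$. *)

theory Defs
  imports "HOL-Analysis.Analysis"
begin

definition monotone_op :: "('a::real_inner \<Rightarrow> 'a set) \<Rightarrow> bool" where
  "monotone_op B \<longleftrightarrow> (\<forall>x y u v. u \<in> B x \<longrightarrow> v \<in> B y \<longrightarrow> inner (u - v) (x - y) \<ge> 0)"

definition maximal_monotone :: "('a::real_inner \<Rightarrow> 'a set) \<Rightarrow> bool" where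
  "maximal_monotone B \<longleftrightarrow> monotone_op B \<and>
     (\<forall>B'. monotone_op B' \<and> (\<forall>x. B x \<subseteq> B' x) \<longrightarrow> B' = B)"

definition cocoercive :: "real \<Rightarrow> ('a::real_inner \<Rightarrow> 'a) \<Rightarrow> bool" where
  "cocoercive \<beta> A \<longleftrightarrow> (\<forall>x y. inner (A x - A y) (x - y) \<ge> \<beta> * (norm (A x - A y))\<^sup>2)"

definition resolvent :: "real \<Rightarrow> ('a::real_inner \<Rightarrow> 'a set) \<Rightarrow> 'a \<Rightarrow> 'a" where
  "resolvent a B z = (THE y. \<exists>u \<in> B y. z = y + a *\<^sub>R u)"

definition proj :: "'a::real_inner set \<Rightarrow> 'a \<Rightarrow> 'a" where
  "proj C z = (THE p. p \<in> C \<and> (\<forall>y\<in>C. norm (z - p) \<le> norm (z - y)))"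

definition zer_sum :: "('a::real_inner \<Rightarrow> 'a) \<Rightarrow> ('a \<Rightarrow> 'a set) \<Rightarrow> 'a set" where
  "zer_sum A B = {x. \<exists>u \<in> B x. A x + u = 0}"

text \<open>Trial point  \<bar>x^k_j  with step size s = \<alpha>_{k-1} \<theta>^j.\<close>
definition trial_point :: "('a::real_inner \<Rightarrow> 'a) \<Rightarrow> ('a \<Rightarrow> 'a set) \<Rightarrow> real \<Rightarrow> 'a \<Rightarrow> 'a" where
  "trial_point A B s xk = resolvent s B (xk - s *\<^sub>R A xk)"

definition linesearch_j ::
  "('a::real_inner \<Rightarrow> 'a) \<Rightarrow> ('a \<Rightarrow> 'a) \<Rightarrow> ('a \<Rightarrow> 'a set) \<Rightarrow> real \<Rightarrow> real \<Rightarrow> real \<Rightarrow> 'a \<Rightarrow> nat" where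
  "linesearch_j A A2 B \<theta> \<delta> a xk =
     (LEAST j::nat. (a * \<theta> ^ j) * inner (A2 xk - A2 (trial_point A B (a * \<theta> ^ j) xk))
                                        (xk - trial_point A B (a * \<theta> ^ j) xk)
                    \<le> \<delta> * (norm (xk - trial_point A B (a * \<theta> ^ j) xk))\<^sup>2)"

definition T_set ::
  "('a::real_inner \<Rightarrow> 'a) \<Rightarrow> ('a \<Rightarrow> 'a) \<Rightarrow> ('a \<Rightarrow> 'a set) \<Rightarrow> real \<Rightarrow> real \<Rightarrow> 'a \<Rightarrow> 'a set" where
  "T_set A A2 B \<delta>' ak xk =
     (let xb = trial_point A B ak xk;
          r = (\<delta>' / ak) * (norm (xk - xb))\<^sup>2
      in {x. inner ((1 / ak) *\<^sub>R (xk - xb) - (A2 xk - A2 xb)) (x - xb) \<le> r})"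

definition Gamma_set :: "'a::real_inner \<Rightarrow> 'a \<Rightarrow> 'a set" where
  "Gamma_set x0 xk = {x. inner (x0 - xk) (x - xk) \<le> 0}"

end

theory Submission
  imports Defs
begin

text \<open>If x^{k+1} = x^k, then x^k lies in T_k. Writing y for the trial point at step size \<alpha>_k,
  membership in T_k says |x^k - y|^2 - \<alpha>_k <A2 x^k - A2 y, x^k - y> \<le> \<delta>' |x^k - y|^2, and the line
  search bounds the middle term by \<delta> |x^k - y|^2, so (1 - \<delta> - \<delta>') |x^k - y|^2 \<le> 0. Hence x^k is a
  fixed point of the forward-backward step, i.e. a zero of A + B.

  Every zero of A + B lies in each T_i (cocoercivity of A1 and
  \<alpha>_i \<le> 4 \<beta> \<delta>') and, inductively through the projections, in each \<Gamma>_i; so the projections are onto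
  nonempty sets. If the line search never stopped at a non-zero x^k, uniform continuity of A2 would
  force the trial points to x^k with vanishing scaled residuals, and the closed graph of B would make
  x^k a zero. Finally, resolvents are everywhere defined by Minty's theorem, proved from a finite
  minimax argument together with the finite intersection property of closed balls in a Hilbert
  space.\<close>

section \<open>Monotone operators\<close>

lemma maximal_monotone_imp_monotone_op: "maximal_monotone B \<Longrightarrow> monotone_op B"
  by (simp add: maximal_monotone_def)

lemma maximal_monotone_memI:
  assumes max: "maximal_monotone B"
    and related: "\<And>w v. v \<in> B w \<Longrightarrow> inner (u - v) (y - w) \<ge> 0"
  shows "u \<in> B y"
proof -
  define B' where "B' = B(y := insert u (B y))"
  have graph: "u' \<in> B x \<or> (x, u') = (y, u)" if "u' \<in> B' x" for x u'
    using that by (auto simp: B'_def split: if_splits)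
  have "monotone_op B'"
    unfolding monotone_op_def
  proof (intro allI impI)
    fix x1 x2 u1 u2 assume "u1 \<in> B' x1" "u2 \<in> B' x2"
    then consider "u1 \<in> B x1" "u2 \<in> B x2" | "u1 \<in> B x1" "x2 = y" "u2 = u"
      | "x1 = y" "u1 = u" "u2 \<in> B x2" | "x1 = y" "u1 = u" "x2 = y" "u2 = u"
      using graph by blast
    then show "inner (u1 - u2) (x1 - x2) \<ge> 0"
    proof cases
      case 1
      then show ?thesis
        using maximal_monotone_imp_monotone_op[OF max] by (auto simp: monotone_op_def)
    next
      case 2
      then show ?thesis using related[of u1 x1] by (simp add: inner_diff_left inner_diff_right)
    qed (use related in auto)
  qed
  then have "B' = B" using max by (auto simp: maximal_monotone_def B'_def)
  then show ?thesis by (metis B'_def fun_upd_same insertI1)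
qed

lemma maximal_monotone_graph_closed:
  assumes "maximal_monotone B" "y \<longlonglongrightarrow> y0" "u \<longlonglongrightarrow> u0" "\<And>j. u j \<in> B (y j)"
  shows "u0 \<in> B y0"
proof (rule maximal_monotone_memI[OF assms(1)])
  fix w v assume v: "v \<in> B w"
  have "(\<lambda>j. inner (u j - v) (y j - w)) \<longlonglongrightarrow> inner (u0 - v) (y0 - w)"
    by (intro tendsto_intros assms(2,3))
  moreover have "\<forall>j. 0 \<le> inner (u j - v) (y j - w)"
    using maximal_monotone_imp_monotone_op[OF assms(1)] assms(4) v by (auto simp: monotone_op_def)
  ultimately show "0 \<le> inner (u0 - v) (y0 - w)" by (meson LIMSEQ_le_const)
qed

lemma monotone_op_inclusion_unique:
  assumes "monotone_op B" "s > 0" "u1 \<in> B y1" "u2 \<in> B y2" "y1 + s *\<^sub>R u1 = y2 + s *\<^sub>R u2"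
  shows "y1 = y2"
proof -
  have diff: "y1 - y2 = s *\<^sub>R (u2 - u1)" using assms(5) by (simp add: algebra_simps)
  have "0 \<le> inner (u1 - u2) (y1 - y2)" using assms(1,3,4) by (auto simp: monotone_op_def)
  also have "\<dots> = - s * (norm (u1 - u2))\<^sup>2"
    by (simp add: diff power2_norm_eq_inner inner_diff_left inner_diff_right inner_commute algebra_simps)
  finally have "u1 = u2" using assms(2) by (simp add: mult_le_0_iff)
  then show ?thesis using diff by simp
qed

section \<open>Projections in Hilbert spaces\<close>

lemma Apollonius_dist_midpoint:
  fixes z a b :: "'a::real_inner"
  shows "(dist z (midpoint a b))\<^sup>2 = ((dist z a)\<^sup>2 + (dist z b)\<^sup>2) / 2 - (dist a b)\<^sup>2 / 4"
  by (simp add: dist_norm midpoint_def power2_norm_eq_inner inner_simps inner_commute field_simps)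

lemma convex_midpoint_mem: "convex C \<Longrightarrow> a \<in> C \<Longrightarrow> b \<in> C \<Longrightarrow> midpoint a b \<in> C"
  by (metis convex_hull_eq midpoints_in_convex_hull)

lemma Cauchy_if_dist_sq_le:
  fixes Y :: "nat \<Rightarrow> 'a::metric_space"
  assumes bound: "\<And>n k. n \<le> k \<Longrightarrow> (dist (Y k) (Y n))\<^sup>2 \<le> b n" and "b \<longlonglongrightarrow> 0"
  shows "Cauchy Y"
proof (rule metric_CauchyI)
  fix r :: real assume "r > 0"
  then have "eventually (\<lambda>n. b n < r\<^sup>2) sequentially"
    by (intro order_tendstoD(2)[OF assms(2)]) auto
  then obtain N where N: "\<And>n. n \<ge> N \<Longrightarrow> b n < r\<^sup>2" by (auto simp: eventually_sequentially)
  have "dist (Y k) (Y n) < r" if "N \<le> n" "n \<le> k" for n k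
    using bound[OF that(2)] N[OF that(1)] \<open>r > 0\<close> by (smt (verit) power_mono zero_le_dist)
  then show "\<exists>M. \<forall>m\<ge>M. \<forall>n\<ge>M. dist (Y m) (Y n) < r"
    by (metis dist_commute nle_le)
qed

lemma complete_closest_point_exists:
  fixes C :: "'a::{real_inner,complete_space} set"
  assumes C: "closed C" "convex C" "C \<noteq> {}"
  shows "\<exists>p\<in>C. \<forall>y\<in>C. dist z p \<le> dist z y"
proof -
  define d where "d = (INF y\<in>C. (dist z y)\<^sup>2)"
  have bdd: "bdd_below ((\<lambda>y. (dist z y)\<^sup>2) ` C)" by (auto intro: bdd_belowI[of _ 0])
  have d_le: "d \<le> (dist z y)\<^sup>2" if "y \<in> C" for y
    unfolding d_def using bdd that by (rule cINF_lower2) simp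
  define e where "e n = inverse (real (Suc n))" for n
  have "\<exists>y\<in>C. (dist z y)\<^sup>2 < d + e n" for n
  proof -
    have "d < d + e n" by (simp add: e_def)
    then show ?thesis unfolding d_def using cINF_less_iff[OF C(3) bdd] by blast
  qed
  then obtain Y where Y: "\<And>n. Y n \<in> C" "\<And>n. (dist z (Y n))\<^sup>2 < d + e n" by metis
  have "Cauchy Y"
  proof (rule Cauchy_if_dist_sq_le[where b = "\<lambda>n. 4 * e n"])
    fix n k :: nat assume "n \<le> k"
    then have "e k \<le> e n" by (simp add: e_def field_simps)
    moreover have "d \<le> (dist z (midpoint (Y k) (Y n)))\<^sup>2"
      using d_le convex_midpoint_mem[OF C(2) Y(1) Y(1)] by blast
    ultimately show "(dist (Y k) (Y n))\<^sup>2 \<le> 4 * e n"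
      using Y(2)[of n] Y(2)[of k] unfolding Apollonius_dist_midpoint by (simp add: field_simps)
  qed (use LIMSEQ_inverse_real_of_nat tendsto_mult_right_zero in \<open>auto simp: e_def\<close>)
  then obtain p where p: "Y \<longlonglongrightarrow> p" using Cauchy_convergent convergent_def by blast
  have "(\<lambda>n. (dist z (Y n))\<^sup>2) \<longlonglongrightarrow> (dist z p)\<^sup>2" by (intro tendsto_intros p)
  moreover have "(\<lambda>n. d + e n) \<longlonglongrightarrow> d"
    using tendsto_add[OF tendsto_const LIMSEQ_inverse_real_of_nat] by (simp add: e_def)
  ultimately have "(dist z p)\<^sup>2 \<le> d" using Y(2) by (meson LIMSEQ_le less_imp_le)
  then have "\<forall>y\<in>C. dist z p \<le> dist z y" using d_le by (meson order_trans power2_le_imp_le zero_le_dist)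
  then show ?thesis using closed_sequentially[OF C(1) Y(1) p] by blast
qed

lemma proj_closest:
  fixes C :: "'a::{real_inner,complete_space} set"
  assumes "closed C" "convex C" "C \<noteq> {}"
  shows "proj C z \<in> C \<and> (\<forall>y\<in>C. dist z (proj C z) \<le> dist z y)"
proof -
  obtain p where p: "p \<in> C" "\<forall>y\<in>C. dist z p \<le> dist z y"
    using complete_closest_point_exists[OF assms] by blast
  have "proj C z = p"
    unfolding proj_def
    by (rule the_equality) (use p any_closest_point_unique[OF assms(2,1)] in \<open>auto simp: dist_norm\<close>)
  then show ?thesis using p by simp
qed

lemma proj_in:
  fixes C :: "'a::{real_inner,complete_space} set"
  shows "closed C \<Longrightarrow> convex C \<Longrightarrow> C \<noteq> {} \<Longrightarrow> proj C z \<in> C"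
  using proj_closest by blast

lemma proj_inner_le:
  fixes C :: "'a::{real_inner,complete_space} set"
  assumes "closed C" "convex C" "y \<in> C"
  shows "inner (z - proj C z) (y - proj C z) \<le> 0"
  using proj_closest[OF assms(1,2)] assms by (intro any_closest_point_dot) auto

lemma dist_proj_sq_le:
  fixes C :: "'a::{real_inner,complete_space} set"
  assumes "closed C" "convex C" "y \<in> C"
  shows "(dist y (proj C z))\<^sup>2 \<le> (dist z y)\<^sup>2 - (dist z (proj C z))\<^sup>2"
proof -
  have "z - y = (z - proj C z) - (y - proj C z)" by simp
  then have "(dist z y)\<^sup>2 = (dist z (proj C z))\<^sup>2 - 2 * inner (z - proj C z) (y - proj C z)
      + (dist y (proj C z))\<^sup>2"
    by (simp only: dist_norm power2_norm_eq_inner inner_diff_left inner_diff_right inner_commute)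
      (simp add: inner_commute)
  then show ?thesis using proj_inner_le[OF assms, of z] by linarith
qed

lemma tendsto_zero_if_norm_sq_le:
  fixes X :: "nat \<Rightarrow> 'a::real_normed_vector"
  assumes "\<And>n. (norm (X n))\<^sup>2 \<le> b n" "b \<longlonglongrightarrow> 0"
  shows "X \<longlonglongrightarrow> 0"
proof (rule Lim_null_comparison)
  show "eventually (\<lambda>n. norm (X n) \<le> sqrt (b n)) sequentially"
    using assms(1) by (intro always_eventually) (simp add: real_le_rsqrt)
  show "(\<lambda>n. sqrt (b n)) \<longlonglongrightarrow> 0" using tendsto_real_sqrt[OF assms(2)] by simp
qed

text \<open>Weak compactness is replaced by a Cauchy argument: the minimal-norm points of the finite
  intersections form a Cauchy net, since by the projection inequality their squared distances are
  bounded by the increase of their squared norms, which is bounded.\<close>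

lemma Inter_closed_convex_nonempty:
  fixes \<K> :: "'a::{real_inner,complete_space} set set"
  assumes closed: "\<And>K. K \<in> \<K> \<Longrightarrow> closed K" and convex: "\<And>K. K \<in> \<K> \<Longrightarrow> convex K"
    and K\<^sub>0: "K\<^sub>0 \<in> \<K>" "bounded K\<^sub>0"
    and fip: "\<And>\<F>. \<F> \<subseteq> \<K> \<Longrightarrow> finite \<F> \<Longrightarrow> \<Inter>\<F> \<noteq> {}"
  shows "\<Inter>\<K> \<noteq> {}"
proof -
  define admissible where "admissible \<F> \<longleftrightarrow> finite \<F> \<and> K\<^sub>0 \<in> \<F> \<and> \<F> \<subseteq> \<K>" for \<F>
  define m where "m (\<F> :: 'a set set) = proj (\<Inter>\<F>) 0" for \<F>
  have Inter: "closed (\<Inter>\<F>)" "convex (\<Inter>\<F>)" "\<Inter>\<F> \<noteq> {}" if "admissible \<F>" for \<F>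
  proof -
    from that have "\<F> \<subseteq> \<K>" "finite \<F>" by (simp_all add: admissible_def)
    then show "closed (\<Inter>\<F>)" "convex (\<Inter>\<F>)" "\<Inter>\<F> \<noteq> {}"
      using closed convex fip by (blast intro: closed_Inter convex_Inter)+
  qed
  have m_mem: "m \<F> \<in> \<Inter>\<F>" if "admissible \<F>" for \<F>
    using proj_in[OF Inter[OF that]] by (simp add: m_def)
  have m_step: "(dist (m \<G>) (m \<F>))\<^sup>2 \<le> (norm (m \<G>))\<^sup>2 - (norm (m \<F>))\<^sup>2"
    if "admissible \<F>" "admissible \<G>" "\<F> \<subseteq> \<G>" for \<F> \<G>
  proof -
    have "m \<G> \<in> \<Inter>\<F>" using m_mem[OF that(2)] that(3) by blast
    then show ?thesis using dist_proj_sq_le[OF Inter(1,2)[OF that(1)], of "m \<G>" 0] by (simp add: m_def)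
  qed
  obtain R where R: "\<And>y. y \<in> K\<^sub>0 \<Longrightarrow> norm y \<le> R" using K\<^sub>0(2) by (auto simp: bounded_iff)
  have bdd: "bdd_above ((\<lambda>\<F>. (norm (m \<F>))\<^sup>2) ` Collect admissible)"
  proof (rule bdd_aboveI2)
    fix \<F> assume "\<F> \<in> Collect admissible"
    then have "m \<F> \<in> K\<^sub>0" using m_mem unfolding admissible_def by blast
    then show "(norm (m \<F>))\<^sup>2 \<le> R\<^sup>2" using R by (simp add: power_mono)
  qed
  define V where "V = (SUP \<F>\<in>Collect admissible. (norm (m \<F>))\<^sup>2)"
  have le_V: "(norm (m \<F>))\<^sup>2 \<le> V" if "admissible \<F>" for \<F>
    unfolding V_def using that bdd by (auto intro: cSUP_upper)
  define e where "e n = inverse (real (Suc n))" for n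
  have "\<exists>\<F>. admissible \<F> \<and> V - e n < (norm (m \<F>))\<^sup>2" for n
  proof -
    have "admissible {K\<^sub>0}" using K\<^sub>0 by (simp add: admissible_def)
    moreover have "V - e n < V" by (simp add: e_def)
    ultimately show ?thesis unfolding V_def using less_cSUP_iff[OF _ bdd] by blast
  qed
  then obtain \<F> where \<F>: "\<And>n. admissible (\<F> n)" "\<And>n. V - e n < (norm (m (\<F> n)))\<^sup>2" by metis
  define \<G> where "\<G> n = (\<Union>i\<le>n. \<F> i)" for n
  have \<G>_mono: "\<G> n \<subseteq> \<G> k" if "n \<le> k" for n k
    unfolding \<G>_def using that by (intro UN_mono) auto
  have \<F>_\<G>: "\<F> n \<subseteq> \<G> n" for n
    unfolding \<G>_def by blast
  have \<G>: "admissible (\<G> n)" for n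
  proof -
    have "K\<^sub>0 \<in> \<G> 0" using \<F>(1)[of 0] by (simp add: admissible_def \<G>_def)
    then show ?thesis
      using \<F>(1) \<G>_mono[of 0 n] by (auto simp: admissible_def \<G>_def)
  qed
  have near_sup: "(dist (m \<H>) (m (\<G> n)))\<^sup>2 \<le> e n" if "admissible \<H>" "\<G> n \<subseteq> \<H>" for \<H> n
  proof -
    have "(norm (m (\<F> n)))\<^sup>2 \<le> (norm (m (\<G> n)))\<^sup>2"
      using m_step[OF \<F>(1) \<G> \<F>_\<G>, of n] zero_le_power2[of "dist (m (\<G> n)) (m (\<F> n))"]
      by linarith
    then show ?thesis using m_step[OF \<G> that] le_V[OF that(1)] \<F>(2)[of n] by linarith
  qed
  have e: "e \<longlonglongrightarrow> 0" unfolding e_def by (rule LIMSEQ_inverse_real_of_nat)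
  have "Cauchy (\<lambda>n. m (\<G> n))"
    using near_sup[OF \<G> \<G>_mono] by (rule Cauchy_if_dist_sq_le[OF _ e])
  then obtain y where y: "(\<lambda>n. m (\<G> n)) \<longlonglongrightarrow> y" using Cauchy_convergent convergent_def by blast
  have "y \<in> K" if K: "K \<in> \<K>" for K
  proof -
    define \<H> where "\<H> n = insert K (\<G> n)" for n
    have \<H>: "admissible (\<H> n)" "\<G> n \<subseteq> \<H> n" for n
      using \<G>[of n] K by (auto simp: admissible_def \<H>_def)
    have "(\<lambda>n. m (\<H> n) - m (\<G> n)) \<longlonglongrightarrow> 0"
      using near_sup[OF \<H>] by (intro tendsto_zero_if_norm_sq_le[OF _ e]) (simp add: dist_norm)
    then have lim: "(\<lambda>n. m (\<H> n)) \<longlonglongrightarrow> y" by (rule Lim_transform[OF y])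
    have "\<forall>n. m (\<H> n) \<in> K" using m_mem[OF \<H>(1)] by (simp add: \<H>_def)
    then show ?thesis using closed_sequentially[OF closed[OF K] _ lim] by blast
  qed
  then show ?thesis by blast
qed

section \<open>Minty's theorem\<close>

definition monotone_graph :: "('a::real_inner \<times> 'a) set \<Rightarrow> bool" where
  "monotone_graph S \<longleftrightarrow> (\<forall>(w, v)\<in>S. \<forall>(w', v')\<in>S. 0 \<le> inner (v - v') (w - w'))"

lemma monotone_graphD:
  "monotone_graph S \<Longrightarrow> p \<in> S \<Longrightarrow> q \<in> S \<Longrightarrow> 0 \<le> inner (snd p - snd q) (fst p - fst q)"
  by (cases p, cases q) (auto simp: monotone_graph_def)

lemma convex_combination_monotone_gap_nonpos:
  fixes W V :: "'i \<Rightarrow> 'a::real_inner"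
  assumes Q: "finite Q" and u: "\<And>q. q \<in> Q \<Longrightarrow> 0 \<le> u q" "sum u Q = 1"
    and mono: "\<And>q r. q \<in> Q \<Longrightarrow> r \<in> Q \<Longrightarrow> 0 \<le> inner (V q - V r) (W q - W r)"
  defines "wb \<equiv> \<Sum>r\<in>Q. u r *\<^sub>R W r"
  shows "(\<Sum>q\<in>Q. u q * inner (z - wb - V q) (W q - wb)) \<le> 0"
proof -
  have W_diff: "W q - wb = (\<Sum>r\<in>Q. u r *\<^sub>R (W q - W r))" for q
    by (simp add: wb_def scaleR_diff_right sum_subtractf scaleR_sum_left[symmetric] u(2))
  have "(\<Sum>q\<in>Q. u q * inner (z - wb) (W q - wb)) = inner (z - wb) (\<Sum>q\<in>Q. u q *\<^sub>R (W q - wb))"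
    by (simp add: inner_sum_right)
  also have "(\<Sum>q\<in>Q. u q *\<^sub>R (W q - wb)) = 0"
    by (simp add: wb_def scaleR_diff_right sum_subtractf scaleR_sum_left[symmetric] u(2))
  finally have centred: "(\<Sum>q\<in>Q. u q * inner (z - wb) (W q - wb)) = 0" by simp
  define X where "X = (\<Sum>q\<in>Q. u q * inner (V q) (W q - wb))"
  have X1: "X = (\<Sum>q\<in>Q. \<Sum>r\<in>Q. u q * u r * inner (V q) (W q - W r))"
    unfolding X_def W_diff by (simp add: inner_sum_right sum_distrib_left mult.assoc)
  also have "\<dots> = (\<Sum>r\<in>Q. \<Sum>q\<in>Q. u q * u r * inner (V q) (W q - W r))"
    by (rule sum.swap)
  finally have X2: "X = (\<Sum>q\<in>Q. \<Sum>r\<in>Q. u r * u q * inner (V r) (W r - W q))" .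
  have "X + X = (\<Sum>q\<in>Q. \<Sum>r\<in>Q. u q * u r * inner (V q) (W q - W r))
      + (\<Sum>q\<in>Q. \<Sum>r\<in>Q. u r * u q * inner (V r) (W r - W q))"
    by (simp only: X1[symmetric] X2[symmetric])
  also have "\<dots> = (\<Sum>q\<in>Q. \<Sum>r\<in>Q. u q * u r * inner (V q - V r) (W q - W r))"
    unfolding sum.distrib[symmetric] by (intro sum.cong refl) (simp add: inner_simps algebra_simps)
  also have "\<dots> \<ge> 0" using u(1) mono by (intro sum_nonneg mult_nonneg_nonneg) auto
  finally have "X \<ge> 0" by simp
  have "(\<Sum>q\<in>Q. u q * inner (z - wb - V q) (W q - wb))
      = (\<Sum>q\<in>Q. u q * inner (z - wb) (W q - wb)) - X"
    unfolding X_def sum_subtractf[symmetric]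
    by (intro sum.cong refl) (simp add: inner_diff_left algebra_simps)
  then show ?thesis using centred \<open>X \<ge> 0\<close> by simp
qed

text \<open>The gap y \<mapsto> <z - y - v, w - y> of a pair (w, v) is the quadratic |y|^2 - <y, a> + b
  with (a, b) = gap_coeffs z (w, v), and quad_min (a, b) is its minimum over y, attained at a / 2.
  The finite case of Minty's theorem is a minimax argument: quad_min is concave, it is nonpositive
  on the convex hull of the coefficients by monotonicity, and the variational inequality at its
  maximiser (a, b) bounds every gap at y = a / 2.\<close>

definition gap_coeffs :: "'a::real_inner \<Rightarrow> 'a \<times> 'a \<Rightarrow> 'a \<times> real" where
  "gap_coeffs z p = (z - snd p + fst p, inner (z - snd p) (fst p))"

definition quad_min :: "'a::real_inner \<times> real \<Rightarrow> real" where
  "quad_min q = snd q - (norm (fst q))\<^sup>2 / 4"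

lemma inner_gap_eq:
  "inner (z - y - snd p) (fst p - y) = (norm y)\<^sup>2 - inner y (fst (gap_coeffs z p)) + snd (gap_coeffs z p)"
  by (simp add: gap_coeffs_def power2_norm_eq_inner inner_simps inner_commute)

lemma quad_min_le: "quad_min q \<le> (norm y)\<^sup>2 - inner y (fst q) + snd q"
proof -
  have "0 \<le> (norm (y - (1/2) *\<^sub>R fst q))\<^sup>2" by simp
  then show ?thesis by (simp add: quad_min_def power2_norm_eq_inner inner_simps inner_commute)
qed

lemma quad_min_convex_hull_gap_coeffs_nonpos:
  fixes F :: "('a::real_inner \<times> 'a) set"
  assumes F: "finite F" and mono: "monotone_graph F" and q: "q \<in> convex hull (gap_coeffs z ` F)"
  shows "quad_min q \<le> 0"
proof -
  obtain u where u: "\<And>r. r \<in> gap_coeffs z ` F \<Longrightarrow> 0 \<le> u r" "sum u (gap_coeffs z ` F) = 1"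
    "(\<Sum>r\<in>gap_coeffs z ` F. u r *\<^sub>R r) = q"
    using q unfolding convex_hull_finite[OF finite_imageI[OF F]] by blast
  define pr where "pr = inv_into F (gap_coeffs z)"
  have pr: "pr r \<in> F" "gap_coeffs z (pr r) = r" if "r \<in> gap_coeffs z ` F" for r
    using that by (auto simp: pr_def inv_into_into f_inv_into_f)
  define wb where "wb = (\<Sum>r\<in>gap_coeffs z ` F. u r *\<^sub>R fst (pr r))"
  have q_parts: "fst q = (\<Sum>r\<in>gap_coeffs z ` F. u r *\<^sub>R fst r)"
    "snd q = (\<Sum>r\<in>gap_coeffs z ` F. u r * snd r)"
    using u(3) by (auto simp: fst_sum snd_sum)
  have "quad_min q \<le> (norm wb)\<^sup>2 - inner wb (fst q) + snd q" by (rule quad_min_le)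
  also have "\<dots> = (\<Sum>r\<in>gap_coeffs z ` F. u r * ((norm wb)\<^sup>2 - inner wb (fst r) + snd r))"
    unfolding q_parts
    by (simp add: algebra_simps sum.distrib sum_subtractf sum_distrib_right[symmetric] u(2)
        inner_sum_right sum_distrib_left)
  also have "\<dots> = (\<Sum>r\<in>gap_coeffs z ` F. u r * inner (z - wb - snd (pr r)) (fst (pr r) - wb))"
    by (intro sum.cong refl) (simp add: inner_gap_eq pr)
  also have "\<dots> \<le> 0"
    unfolding wb_def using F u(1,2) pr(1) monotone_graphD[OF mono]
    by (intro convex_combination_monotone_gap_nonpos) auto
  finally show ?thesis .
qed

lemma le_zero_if_le_mult_small:
  fixes X K :: real
  assumes "\<And>t. 0 < t \<Longrightarrow> t \<le> 1 \<Longrightarrow> X \<le> t * K"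
  shows "X \<le> 0"
proof (rule ccontr)
  assume "\<not> X \<le> 0"
  then have X: "X > 0" by simp
  have K: "K \<ge> X" using assms[of 1] by simp
  define t where "t = min 1 (X / (2 * K))"
  have t: "0 < t" "t \<le> 1" using X K by (auto simp: t_def)
  have "t * K \<le> (X / (2 * K)) * K" using K X by (intro mult_right_mono) (auto simp: t_def)
  also have "\<dots> = X / 2" using K X by (simp add: field_simps)
  finally show False using assms[OF t] X by simp
qed

lemma quad_min_argmax_variational_ineq:
  assumes P: "convex P" "m \<in> P" "q \<in> P" and max: "\<And>r. r \<in> P \<Longrightarrow> quad_min r \<le> quad_min m"
  shows "snd q - snd m \<le> inner (fst m) (fst q - fst m) / 2"
proof -
  define d where "d = q - m"
  have "snd d - inner (fst m) (fst d) / 2 \<le> 0"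
  proof (rule le_zero_if_le_mult_small)
    fix t :: real assume t: "0 < t" "t \<le> 1"
    have "(1 - t) *\<^sub>R m + t *\<^sub>R q \<in> P" using convexD[OF P, of "1 - t" t] t by simp
    then have "quad_min (m + t *\<^sub>R d) \<le> quad_min m" using max by (simp add: d_def algebra_simps)
    moreover have "(norm (fst m + t *\<^sub>R fst d))\<^sup>2
        = (norm (fst m))\<^sup>2 + 2 * t * inner (fst m) (fst d) + t\<^sup>2 * (norm (fst d))\<^sup>2"
      unfolding power2_norm_eq_inner by (simp add: inner_simps inner_commute power2_eq_square)
    ultimately have "t * (snd d - inner (fst m) (fst d) / 2) \<le> t * (t * ((norm (fst d))\<^sup>2 / 4))"
      by (simp add: quad_min_def field_simps power2_eq_square)
    then show "snd d - inner (fst m) (fst d) / 2 \<le> t * ((norm (fst d))\<^sup>2 / 4)" using t by simp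
  qed
  then show ?thesis by (simp add: d_def inner_diff_right)
qed

lemma finite_monotone_graph_extension:
  fixes F :: "('a::real_inner \<times> 'a) set"
  assumes F: "finite F" and mono: "monotone_graph F"
  shows "\<exists>y. \<forall>(w, v)\<in>F. inner (z - y - v) (w - y) \<le> 0"
proof (cases "F = {}")
  case False
  define P where "P = convex hull (gap_coeffs z ` F)"
  have "compact P" "P \<noteq> {}" using F False by (auto simp: P_def finite_imp_compact_convex_hull)
  moreover have "continuous_on P quad_min" unfolding quad_min_def by (intro continuous_intros) auto
  ultimately obtain m where m: "m \<in> P" "\<And>q. q \<in> P \<Longrightarrow> quad_min q \<le> quad_min m"
    using continuous_attains_sup by metis
  have "inner (z - (1/2) *\<^sub>R fst m - snd p) (fst p - (1/2) *\<^sub>R fst m) \<le> 0" if "p \<in> F" for p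
  proof -
    have q: "gap_coeffs z p \<in> P" using that by (simp add: P_def hull_inc)
    have "inner (z - (1/2) *\<^sub>R fst m - snd p) (fst p - (1/2) *\<^sub>R fst m)
        = quad_min m + (snd (gap_coeffs z p) - snd m
            - inner (fst m) (fst (gap_coeffs z p) - fst m) / 2)"
      unfolding inner_gap_eq
      by (simp add: quad_min_def power_divide power2_norm_eq_inner inner_simps inner_commute
          field_simps)
    also have "\<dots> \<le> quad_min m"
      using quad_min_argmax_variational_ineq[OF convex_convex_hull[of "gap_coeffs z ` F", folded P_def]
          m(1) q m(2)] by simp
    also have "\<dots> \<le> 0"
      using quad_min_convex_hull_gap_coeffs_nonpos[OF F mono m(1)[unfolded P_def]] .
    finally show ?thesis .
  qed
  then show ?thesis by (intro exI[of _ "(1/2) *\<^sub>R fst m"]) force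
qed simp

lemma inner_diff_le_0_iff_mem_cball:
  fixes a b y :: "'a::real_inner"
  shows "inner (a - y) (b - y) \<le> 0 \<longleftrightarrow> y \<in> cball (midpoint a b) (dist a b / 2)"
proof -
  have "inner (a - y) (b - y) = (dist (midpoint a b) y)\<^sup>2 - (dist a b / 2)\<^sup>2"
    by (simp add: dist_norm midpoint_def power_divide power2_norm_eq_inner inner_simps inner_commute
        field_simps)
  then show ?thesis by (simp add: abs_le_square_iff)
qed

lemma monotone_graph_extension:
  fixes S :: "('a::{real_inner,complete_space} \<times> 'a) set"
  assumes mono: "monotone_graph S"
  shows "\<exists>y. \<forall>(w, v)\<in>S. inner (z - y - v) (w - y) \<le> 0"
proof (cases "S = {}")
  case False
  then obtain p0 where p0: "p0 \<in> S" by blast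
  define Thales where "Thales p = cball (midpoint (z - snd p) (fst p)) (dist (z - snd p) (fst p) / 2)"
    for p
  have mem_Thales: "y \<in> Thales p \<longleftrightarrow> inner (z - y - snd p) (fst p - y) \<le> 0" for p y
  proof -
    have "z - y - snd p = (z - snd p) - y" by simp
    then show ?thesis
      using inner_diff_le_0_iff_mem_cball[of "z - snd p" y "fst p"] unfolding Thales_def by metis
  qed
  have "\<Inter>(Thales ` S) \<noteq> {}"
  proof (rule Inter_closed_convex_nonempty[where K\<^sub>0 = "Thales p0"])
    show "closed K" "convex K" if "K \<in> Thales ` S" for K
      using that by (auto simp: Thales_def)
    show "Thales p0 \<in> Thales ` S" using p0 by (rule imageI)
    show "bounded (Thales p0)" by (simp add: Thales_def)
    fix \<F> assume "\<F> \<subseteq> Thales ` S" "finite \<F>"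
    then obtain F where F: "F \<subseteq> S" "finite F" "\<F> = Thales ` F"
      by (meson finite_subset_image)
    have "monotone_graph F" using mono F(1) unfolding monotone_graph_def by blast
    then obtain y where y: "\<forall>(w, v)\<in>F. inner (z - y - v) (w - y) \<le> 0"
      using finite_monotone_graph_extension[OF F(2)] by blast
    have "y \<in> Thales p" if "p \<in> F" for p
      using y that unfolding mem_Thales by (cases p) auto
    then show "\<Inter>\<F> \<noteq> {}" using F(3) by blast
  qed
  then obtain y where "y \<in> Thales p" if "p \<in> S" for p by blast
  then show ?thesis unfolding mem_Thales by (intro exI[of _ y]) auto
qed simp

theorem maximal_monotone_Minty:
  fixes B :: "'a::{real_inner,complete_space} \<Rightarrow> 'a set"
  assumes max: "maximal_monotone B" and s: "s > 0"
  shows "\<exists>y. \<exists>u\<in>B y. z = y + s *\<^sub>R u"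
proof -
  define S where "S = {(w, s *\<^sub>R v) | w v. v \<in> B w}"
  have "0 \<le> inner (s *\<^sub>R v - s *\<^sub>R v') (w - w')" if "v \<in> B w" "v' \<in> B w'" for w v w' v'
  proof -
    have "0 \<le> inner (v - v') (w - w')"
      using maximal_monotone_imp_monotone_op[OF max] that unfolding monotone_op_def by blast
    then show ?thesis using s by (simp flip: scaleR_diff_right)
  qed
  then have "monotone_graph S" unfolding monotone_graph_def S_def by blast
  then obtain y where y: "\<forall>(w, v)\<in>S. inner (z - y - v) (w - y) \<le> 0"
    using monotone_graph_extension by blast
  define u where "u = (1 / s) *\<^sub>R (z - y)"
  have "u \<in> B y"
  proof (rule maximal_monotone_memI[OF max])
    fix w v assume "v \<in> B w"
    then have "(w, s *\<^sub>R v) \<in> S" by (auto simp: S_def)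
    from bspec[OF y this] have "inner (z - y - s *\<^sub>R v) (w - y) \<le> 0" by simp
    moreover have "z - y - s *\<^sub>R v = s *\<^sub>R (u - v)" using s by (simp add: u_def algebra_simps)
    ultimately have "s * inner (u - v) (y - w) \<ge> 0"
      by (simp add: inner_diff_right inner_diff_left algebra_simps)
    then show "inner (u - v) (y - w) \<ge> 0" using s by (simp add: zero_le_mult_iff)
  qed
  moreover have "z = y + s *\<^sub>R u" using s by (simp add: u_def)
  ultimately show ?thesis by blast
qed

lemma resolvent_eq_iff:
  fixes B :: "'a::{real_inner,complete_space} \<Rightarrow> 'a set"
  assumes max: "maximal_monotone B" and s: "s > 0"
  shows "resolvent s B z = y \<longleftrightarrow> (\<exists>u\<in>B y. z = y + s *\<^sub>R u)"
proof -
  obtain y0 u0 where y0: "u0 \<in> B y0" "z = y0 + s *\<^sub>R u0"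
    using maximal_monotone_Minty[OF max s] by blast
  have unique: "y' = y0" if sol: "\<exists>u\<in>B y'. z = y' + s *\<^sub>R u" for y'
  proof -
    obtain u' where "u' \<in> B y'" "z = y' + s *\<^sub>R u'" using sol by blast
    then show ?thesis
      using monotone_op_inclusion_unique[OF maximal_monotone_imp_monotone_op[OF max] s _ y0(1)] y0(2)
      by metis
  qed
  have "resolvent s B z = y0"
    unfolding resolvent_def using y0 unique by (intro the_equality) auto
  then show ?thesis using y0 unique by auto
qed

section \<open>Forward-backward trial points\<close>

lemma trial_point_inclusion:
  fixes B :: "'a::{real_inner,complete_space} \<Rightarrow> 'a set"
  assumes "maximal_monotone B" "s > 0"
  shows "(1 / s) *\<^sub>R (x - trial_point A B s x) - A x \<in> B (trial_point A B s x)"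
proof -
  obtain u where u: "u \<in> B (trial_point A B s x)" "x - s *\<^sub>R A x = trial_point A B s x + s *\<^sub>R u"
    using resolvent_eq_iff[OF assms] unfolding trial_point_def by blast
  then have "x - trial_point A B s x = s *\<^sub>R (A x + u)" by (simp add: algebra_simps)
  then show ?thesis using u(1) assms(2) by simp
qed

lemma zer_sumI: "- A x \<in> B x \<Longrightarrow> x \<in> zer_sum A B"
  by (auto simp: zer_sum_def intro: bexI[of _ "- A x"])

lemma trial_point_fixed_imp_zer_sum:
  fixes B :: "'a::{real_inner,complete_space} \<Rightarrow> 'a set"
  assumes "maximal_monotone B" "s > 0" "trial_point A B s x = x"
  shows "x \<in> zer_sum A B"
  using trial_point_inclusion[OF assms(1,2), of x A] assms(3) by (simp add: zer_sumI)

lemma uniformly_continuous_on_UNIV_affine_bound: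
  fixes f :: "'a::real_normed_vector \<Rightarrow> 'b::real_normed_vector"
  assumes "uniformly_continuous_on UNIV f"
  obtains C D where "C \<ge> 0" "D \<ge> 0" "\<And>u w. norm (f u - f w) \<le> C + D * norm (u - w)"
proof -
  obtain d where d: "d > 0" "\<And>x x'. dist x' x < d \<Longrightarrow> dist (f x') (f x) < 1"
    using assms unfolding uniformly_continuous_on_def by (meson UNIV_I zero_less_one)
  have chain: "norm (f u - f w) \<le> real n" if "norm (u - w) \<le> real n * d / 2" for n u w
    using that
  proof (induction n arbitrary: u)
    case (Suc n)
    define c where "c = real n / real (Suc n)"
    define u' where "u' = w + c *\<^sub>R (u - w)"
    have "norm (u' - w) = c * norm (u - w)" by (simp add: u'_def c_def)
    also have "\<dots> \<le> c * (real (Suc n) * d / 2)"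
      using Suc.prems by (intro mult_left_mono) (auto simp: c_def)
    also have "\<dots> = real n * d / 2" by (simp add: c_def)
    finally have "norm (f u' - f w) \<le> real n" by (rule Suc.IH)
    have "u - u' = (1 - c) *\<^sub>R (u - w)" by (simp add: u'_def scaleR_diff_left)
    moreover have "1 - c = 1 / real (Suc n)" by (simp add: c_def field_simps)
    ultimately have "norm (u - u') = norm (u - w) / real (Suc n)" by simp
    also have "\<dots> \<le> d / 2" using Suc.prems by (simp add: field_simps)
    finally have "norm (f u - f u') < 1" using d by (simp add: dist_norm)
    then show ?case
      using \<open>norm (f u' - f w) \<le> real n\<close> norm_triangle_ineq[of "f u - f u'" "f u' - f w"] by simp
  qed simp
  have "norm (f u - f w) \<le> 1 + (2 / d) * norm (u - w)" for u w
  proof -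
    define n where "n = nat \<lceil>(2 / d) * norm (u - w)\<rceil>"
    have "real n = of_int \<lceil>(2 / d) * norm (u - w)\<rceil>" using d(1) by (simp add: n_def)
    then have n: "(2 / d) * norm (u - w) \<le> real n" "real n \<le> (2 / d) * norm (u - w) + 1"
      using le_of_int_ceiling of_int_ceiling_le_add_one by (metis, metis)
    have "norm (u - w) \<le> real n * d / 2" using n(1) d(1) by (simp add: field_simps)
    then show ?thesis using chain n(2) by fastforce
  qed
  then show ?thesis using d(1) that[of 1 "2 / d"] by simp
qed

lemma linesearch_failure_tendsto:
  fixes A2 :: "'a::real_normed_vector \<Rightarrow> 'b::real_normed_vector"
  assumes uc: "uniformly_continuous_on UNIV A2" and \<delta>: "\<delta> > 0"
    and s: "s \<longlonglongrightarrow> 0" "\<And>j. s j > 0"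
    and fails: "\<And>j. \<delta> * norm (x - y j) \<le> s j * norm (A2 x - A2 (y j))"
  shows "y \<longlonglongrightarrow> x"
proof -
  obtain C D where CD: "C \<ge> 0" "D \<ge> 0" "\<And>u w. norm (A2 u - A2 w) \<le> C + D * norm (u - w)"
    using uniformly_continuous_on_UNIV_affine_bound[OF uc] by blast
  have "eventually (\<lambda>j. s j * D < \<delta> / 2) sequentially"
    using \<delta> by (intro order_tendstoD(2)) (auto intro: tendsto_mult_left_zero s(1))
  then have "eventually (\<lambda>j. norm (x - y j) \<le> 2 * C / \<delta> * s j) sequentially"
  proof (rule eventually_mono)
    fix j assume small: "s j * D < \<delta> / 2"
    have "\<delta> * norm (x - y j) \<le> s j * C + (s j * D) * norm (x - y j)"
      using fails[of j] mult_left_mono[OF CD(3)[of x "y j"] less_imp_le[OF s(2)[of j]]]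
      by (simp add: algebra_simps)
    also have "\<dots> \<le> s j * C + \<delta> / 2 * norm (x - y j)"
      using small by (intro add_left_mono mult_right_mono) auto
    finally show "norm (x - y j) \<le> 2 * C / \<delta> * s j" using \<delta> by (simp add: field_simps)
  qed
  moreover have "(\<lambda>j. 2 * C / \<delta> * s j) \<longlonglongrightarrow> 0" by (rule tendsto_mult_right_zero[OF s(1)])
  ultimately have "(\<lambda>j. x - y j) \<longlonglongrightarrow> 0" by (rule Lim_null_comparison)
  then have "(\<lambda>j. x - (x - y j)) \<longlonglongrightarrow> x - 0" by (intro tendsto_intros)
  then show ?thesis by simp
qed

lemma linesearch_failure_scaled_residual_tendsto_0:
  fixes A2 :: "'a::real_normed_vector \<Rightarrow> 'b::real_normed_vector"
  assumes uc: "uniformly_continuous_on UNIV A2" and \<delta>: "\<delta> > 0"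
    and s: "s \<longlonglongrightarrow> 0" "\<And>j. s j > 0"
    and fails: "\<And>j. \<delta> * norm (x - y j) \<le> s j * norm (A2 x - A2 (y j))"
  shows "(\<lambda>j. (1 / s j) *\<^sub>R (x - y j)) \<longlonglongrightarrow> 0"
proof (rule Lim_null_comparison)
  have "y \<longlonglongrightarrow> x" by (rule linesearch_failure_tendsto[OF uc \<delta> s fails])
  then have "(\<lambda>j. A2 (y j)) \<longlonglongrightarrow> A2 x"
    by (rule continuous_on_tendsto_compose[OF uniformly_continuous_imp_continuous[OF uc]]) auto
  then have "(\<lambda>j. A2 x - A2 (y j)) \<longlonglongrightarrow> A2 x - A2 x" by (intro tendsto_intros)
  then show "(\<lambda>j. norm (A2 x - A2 (y j)) / \<delta>) \<longlonglongrightarrow> 0"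
    by (intro tendsto_divide_zero) (simp add: tendsto_norm_zero_iff)
  have "norm ((1 / s j) *\<^sub>R (x - y j)) \<le> norm (A2 x - A2 (y j)) / \<delta>" for j
  proof -
    have "norm ((1 / s j) *\<^sub>R (x - y j)) = norm (x - y j) / s j" using s(2)[of j] by simp
    also have "\<dots> \<le> norm (A2 x - A2 (y j)) / \<delta>"
      using fails[of j] s(2)[of j] \<delta> by (simp add: field_simps)
    finally show ?thesis .
  qed
  then show "eventually (\<lambda>j. norm ((1 / s j) *\<^sub>R (x - y j)) \<le> norm (A2 x - A2 (y j)) / \<delta>) sequentially"
    by (intro always_eventually allI)
qed

lemma linesearch_terminates:
  fixes A A2 :: "'a::{real_inner,complete_space} \<Rightarrow> 'a" and B :: "'a \<Rightarrow> 'a set"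
  assumes a: "a > 0" and \<theta>: "0 < \<theta>" "\<theta> < 1" and \<delta>: "\<delta> > 0"
    and uc: "uniformly_continuous_on UNIV A2" and max: "maximal_monotone B"
    and nonzero: "x \<notin> zer_sum A B"
  shows "\<exists>j. (a * \<theta> ^ j) * inner (A2 x - A2 (trial_point A B (a * \<theta> ^ j) x))
                 (x - trial_point A B (a * \<theta> ^ j) x)
             \<le> \<delta> * (norm (x - trial_point A B (a * \<theta> ^ j) x))\<^sup>2"
proof (rule ccontr)
  assume no_step: "\<not> ?thesis"
  define s where "s = (\<lambda>j. a * \<theta> ^ j)"
  define y where "y j = trial_point A B (s j) x" for j
  have "(\<lambda>j. a * \<theta> ^ j) \<longlonglongrightarrow> a * 0" using \<theta> by (intro tendsto_intros) simp
  then have s: "s \<longlonglongrightarrow> 0" "\<And>j. s j > 0" using a \<theta> by (simp_all add: s_def)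
  have fails: "\<delta> * norm (x - y j) \<le> s j * norm (A2 x - A2 (y j))" for j
  proof -
    have "\<delta> * (norm (x - y j))\<^sup>2 < s j * inner (A2 x - A2 (y j)) (x - y j)"
      using no_step by (auto simp: s_def y_def not_le)
    also have "\<dots> \<le> s j * (norm (A2 x - A2 (y j)) * norm (x - y j))"
      using less_imp_le[OF s(2)] norm_cauchy_schwarz by (rule mult_left_mono[rotated])
    finally have "(\<delta> * norm (x - y j)) * norm (x - y j)
        < (s j * norm (A2 x - A2 (y j))) * norm (x - y j)"
      by (simp add: power2_eq_square ac_simps)
    then show ?thesis by (simp add: mult_less_cancel_right)
  qed
  have y: "y \<longlonglongrightarrow> x" by (rule linesearch_failure_tendsto[OF uc \<delta> s fails])
  have "(\<lambda>j. (1 / s j) *\<^sub>R (x - y j)) \<longlonglongrightarrow> 0"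
    by (rule linesearch_failure_scaled_residual_tendsto_0[OF uc \<delta> s fails])
  then have lim: "(\<lambda>j. (1 / s j) *\<^sub>R (x - y j) - A x) \<longlonglongrightarrow> 0 - A x" by (intro tendsto_intros)
  have incl: "(1 / s j) *\<^sub>R (x - y j) - A x \<in> B (y j)" for j
    unfolding y_def by (rule trial_point_inclusion[OF max s(2)])
  have "- A x \<in> B x" using maximal_monotone_graph_closed[OF max y lim incl] by simp
  then show False using nonzero zer_sumI[of A x B] by blast
qed

lemma linesearch_j_condition:
  fixes A A2 :: "'a::{real_inner,complete_space} \<Rightarrow> 'a" and B :: "'a \<Rightarrow> 'a set"
  assumes "a > 0" "0 < \<theta>" "\<theta> < 1" "\<delta> > 0"
    and "uniformly_continuous_on UNIV A2" "maximal_monotone B" "x \<notin> zer_sum A B"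
  defines "s \<equiv> a * \<theta> ^ linesearch_j A A2 B \<theta> \<delta> a x"
  shows "s * inner (A2 x - A2 (trial_point A B s x)) (x - trial_point A B s x)
      \<le> \<delta> * (norm (x - trial_point A B s x))\<^sup>2"
  unfolding s_def linesearch_j_def by (rule LeastI_ex[OF linesearch_terminates[OF assms(1-7)]])

section \<open>The hybrid projection step\<close>

lemma mem_T_set_iff:
  "y \<in> T_set A A2 B \<delta>' s x \<longleftrightarrow>
    inner ((1 / s) *\<^sub>R (x - trial_point A B s x) - (A2 x - A2 (trial_point A B s x)))
      (y - trial_point A B s x) \<le> \<delta>' / s * (norm (x - trial_point A B s x))\<^sup>2"
  by (simp add: T_set_def Let_def)

lemma shifted_halfspace_closed_convex:
  fixes g c :: "'a::real_inner"
  shows "closed {y. inner g (y - c) \<le> r} \<and> convex {y. inner g (y - c) \<le> r}"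
proof -
  have "{y. inner g (y - c) \<le> r} = {y. inner g y \<le> r + inner g c}" by (auto simp: inner_diff_right)
  then show ?thesis by (simp add: closed_halfspace_le convex_halfspace_le)
qed

lemma T_set_closed_convex: "closed (T_set A A2 B \<delta>' s x) \<and> convex (T_set A A2 B \<delta>' s x)"
  unfolding T_set_def Let_def by (rule shifted_halfspace_closed_convex)

lemma Gamma_set_closed_convex: "closed (Gamma_set x0 x) \<and> convex (Gamma_set x0 x)"
  unfolding Gamma_set_def by (rule shifted_halfspace_closed_convex)

lemma zer_sum_subset_T_set:
  fixes A1 A2 :: "'a::{real_inner,complete_space} \<Rightarrow> 'a" and B :: "'a \<Rightarrow> 'a set"
  assumes \<beta>: "\<beta> > 0" and coc: "cocoercive \<beta> A1"
    and A2_mono: "\<And>u w. 0 \<le> inner (A2 u - A2 w) (u - w)"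
    and max: "maximal_monotone B" and s: "0 < s" "s \<le> 4 * \<beta> * \<delta>'"
  shows "zer_sum (\<lambda>z. A1 z + A2 z) B \<subseteq> T_set (\<lambda>z. A1 z + A2 z) A2 B \<delta>' s x"
proof
  fix xs assume "xs \<in> zer_sum (\<lambda>z. A1 z + A2 z) B"
  then obtain us where us: "us \<in> B xs" "A1 xs + A2 xs + us = 0" by (auto simp: zer_sum_def)
  then have us_eq: "us = - (A1 xs + A2 xs)" by (simp only: add_eq_0_iff)
  define xb where "xb = trial_point (\<lambda>z. A1 z + A2 z) B s x"
  define u where "u = (1 / s) *\<^sub>R (x - xb) - (A1 x + A2 x)"
  define D where "D = A1 x - A1 xs"
  define t where "t = norm (x - xb)"
  have u: "u \<in> B xb" unfolding u_def xb_def by (rule trial_point_inclusion[OF max s(1)])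
  have "inner ((1 / s) *\<^sub>R (x - xb) - (A2 x - A2 xb)) (xs - xb)
      = - inner (u - us) (xb - xs) - inner (A2 xb - A2 xs) (xb - xs) - inner D (x - xs) + inner D (x - xb)"
    by (simp add: u_def us_eq D_def inner_simps algebra_simps)
  also have "\<dots> \<le> - \<beta> * (norm D)\<^sup>2 + norm D * t"
  proof -
    have "0 \<le> inner (u - us) (xb - xs)"
      using maximal_monotone_imp_monotone_op[OF max] u us(1) unfolding monotone_op_def by blast
    moreover have "\<beta> * (norm D)\<^sup>2 \<le> inner D (x - xs)" using coc by (simp add: cocoercive_def D_def)
    moreover have "inner D (x - xb) \<le> norm D * t" unfolding t_def by (rule norm_cauchy_schwarz)
    ultimately show ?thesis using A2_mono[of xb xs] by linarith
  qed
  also have "\<dots> \<le> t\<^sup>2 / (4 * \<beta>)"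
  proof -
    have "0 \<le> (2 * \<beta> * norm D - t)\<^sup>2" by simp
    then show ?thesis using \<beta> by (simp add: field_simps power2_eq_square)
  qed
  also have "\<dots> \<le> \<delta>' / s * t\<^sup>2"
  proof -
    have "s * t\<^sup>2 \<le> (4 * \<beta> * \<delta>') * t\<^sup>2" using s(2) by (intro mult_right_mono) auto
    then show ?thesis using s(1) \<beta> by (simp add: field_simps)
  qed
  finally show "xs \<in> T_set (\<lambda>z. A1 z + A2 z) A2 B \<delta>' s x"
    unfolding mem_T_set_iff xb_def[symmetric] t_def .
qed

lemma hybrid_projection_invariant:
  fixes x :: "nat \<Rightarrow> 'a::{real_inner,complete_space}" and T :: "nat \<Rightarrow> 'a set"
  assumes T: "\<And>i. closed (T i) \<and> convex (T i)"
    and S: "\<And>i. i \<le> k \<Longrightarrow> S \<subseteq> T i"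
    and x: "\<And>i. i \<le> k \<Longrightarrow> x (Suc i) = proj (T i \<inter> Gamma_set (x 0) (x i)) (x 0)"
  shows "i \<le> k \<Longrightarrow> S \<subseteq> T i \<inter> Gamma_set (x 0) (x i)"
proof (induction i)
  case 0
  then show ?case using S[of 0] by (auto simp: Gamma_set_def)
next
  case (Suc i)
  have C: "closed (T i \<inter> Gamma_set (x 0) (x i))" "convex (T i \<inter> Gamma_set (x 0) (x i))"
    using T[of i] Gamma_set_closed_convex[of "x 0" "x i"] by (simp_all add: closed_Int convex_Int)
  have "S \<subseteq> Gamma_set (x 0) (x (Suc i))"
  proof
    fix y assume "y \<in> S"
    then have y: "y \<in> T i \<inter> Gamma_set (x 0) (x i)" using Suc by auto
    show "y \<in> Gamma_set (x 0) (x (Suc i))"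
      using proj_inner_le[OF C y, of "x 0"] x[of i] Suc.prems by (simp add: Gamma_set_def)
  qed
  then show ?case using S[OF Suc.prems] by blast
qed

lemma hybrid_projection_mem:
  fixes x :: "nat \<Rightarrow> 'a::{real_inner,complete_space}" and T :: "nat \<Rightarrow> 'a set"
  assumes T: "\<And>i. closed (T i) \<and> convex (T i)"
    and S: "\<And>i. i \<le> k \<Longrightarrow> S \<subseteq> T i" "S \<noteq> {}"
    and x: "\<And>i. i \<le> k \<Longrightarrow> x (Suc i) = proj (T i \<inter> Gamma_set (x 0) (x i)) (x 0)"
    and "i \<le> k"
  shows "x (Suc i) \<in> T i"
proof -
  have "T i \<inter> Gamma_set (x 0) (x i) \<noteq> {}"
    using hybrid_projection_invariant[OF T S(1) x \<open>i \<le> k\<close>] S(2) by blast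
  moreover have "closed (T i \<inter> Gamma_set (x 0) (x i))" "convex (T i \<inter> Gamma_set (x 0) (x i))"
    using T[of i] Gamma_set_closed_convex[of "x 0" "x i"] by (simp_all add: closed_Int convex_Int)
  ultimately show ?thesis using proj_in x[OF \<open>i \<le> k\<close>] by fastforce
qed

lemma step_sizes_bounded:
  fixes \<alpha> :: "nat \<Rightarrow> real"
  assumes \<theta>: "0 < \<theta>" "\<theta> \<le> 1" and "\<alpha> 0 > 0"
    and step: "\<And>i. i < n \<Longrightarrow> \<alpha> (Suc i) = \<alpha> i * \<theta> ^ j i"
  shows "i \<le> n \<Longrightarrow> 0 < \<alpha> i \<and> \<alpha> i \<le> \<alpha> 0"
proof (induction i)
  case (Suc i)
  then have \<alpha>_i: "0 < \<alpha> i" "\<alpha> i \<le> \<alpha> 0" by simp_all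
  have \<theta>_j: "0 < \<theta> ^ j i" "\<theta> ^ j i \<le> 1" using \<theta> by (simp_all add: power_le_one)
  have "\<alpha> i * \<theta> ^ j i \<le> \<alpha> i" using mult_left_le[OF \<theta>_j(2)] \<alpha>_i(1) by simp
  then have "\<alpha> i * \<theta> ^ j i \<le> \<alpha> 0" using \<alpha>_i(2) by linarith
  then show ?case using step[of i] Suc.prems \<alpha>_i \<theta>_j by simp
qed (simp add: assms(3))

lemma self_mem_T_set_imp_trial_point_eq:
  fixes A A2 :: "'a::real_inner \<Rightarrow> 'a"
  assumes s: "s > 0" and \<delta>: "\<delta> + \<delta>' < 1"
    and linesearch: "s * inner (A2 x - A2 (trial_point A B s x)) (x - trial_point A B s x)
      \<le> \<delta> * (norm (x - trial_point A B s x))\<^sup>2"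
    and mem: "x \<in> T_set A A2 B \<delta>' s x"
  shows "trial_point A B s x = x"
proof -
  define d where "d = x - trial_point A B s x"
  define a where "a = inner (A2 x - A2 (trial_point A B s x)) d"
  have "(1 / s) * (norm d)\<^sup>2 - a \<le> \<delta>' / s * (norm d)\<^sup>2"
    using mem unfolding mem_T_set_iff d_def[symmetric] a_def
    by (simp add: inner_diff_left power2_norm_eq_inner)
  then have "s * ((1 / s) * (norm d)\<^sup>2 - a) \<le> s * (\<delta>' / s * (norm d)\<^sup>2)"
    using s by (intro mult_left_mono) auto
  then have "(norm d)\<^sup>2 - s * a \<le> \<delta>' * (norm d)\<^sup>2" using s by (simp add: right_diff_distrib)
  moreover have "s * a \<le> \<delta> * (norm d)\<^sup>2" using linesearch by (simp add: a_def d_def)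
  ultimately have "(1 - \<delta> - \<delta>') * (norm d)\<^sup>2 \<le> 0" by (simp add: algebra_simps)
  then have "d = 0" using \<delta> by (simp add: mult_le_0_iff)
  then show ?thesis by (simp add: d_def)
qed

lemma self_mem_T_set_imp_zer_sum:
  fixes A A2 :: "'a::{real_inner,complete_space} \<Rightarrow> 'a" and B :: "'a \<Rightarrow> 'a set" and x :: 'a
  assumes a: "a > 0" and \<theta>: "0 < \<theta>" "\<theta> < 1" and \<delta>: "\<delta> > 0" "\<delta> + \<delta>' < 1"
    and uc: "uniformly_continuous_on UNIV A2" and max: "maximal_monotone B"
  defines "s \<equiv> a * \<theta> ^ linesearch_j A A2 B \<theta> \<delta> a x"
  assumes mem: "x \<in> T_set A A2 B \<delta>' s x"
  shows "x \<in> zer_sum A B"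
proof (rule ccontr)
  assume nonzero: "x \<notin> zer_sum A B"
  have "s > 0" using a \<theta> by (simp add: s_def)
  moreover have "trial_point A B s x = x"
    using self_mem_T_set_imp_trial_point_eq[OF _ \<delta>(2) _ mem] \<open>s > 0\<close>
      linesearch_j_condition[OF a \<theta> \<delta>(1) uc max nonzero] by (simp add: s_def)
  ultimately show False using trial_point_fixed_imp_zer_sum[OF max] nonzero by blast
qed

theorem proposition4p10:
  fixes A1 A2 :: "'a::{real_inner, complete_space} \<Rightarrow> 'a"
    and B :: "'a \<Rightarrow> 'a set"
    and \<beta> \<theta> \<delta> \<delta>' \<alpha>\<^sub>0 :: real
    and x :: "nat \<Rightarrow> 'a" and \<alpha> :: "nat \<Rightarrow> real"
    and k :: nat
  assumes "\<beta> > 0" and "cocoercive \<beta> A1"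
    and "maximal_monotone (\<lambda>z. {A2 z})" and "uniformly_continuous_on UNIV A2"
    and "maximal_monotone B"
    and "zer_sum (\<lambda>z. A1 z + A2 z) B \<noteq> {}"
    and "0 < \<theta>" and "\<theta> < 1" and "0 < \<delta>" and "\<delta> < 1" and "\<delta>' > 0" and "1 - \<delta> - \<delta>' > 0"
    and "\<alpha>\<^sub>0 > 0" and "\<alpha>\<^sub>0 \<le> 4 * \<beta> * \<delta>'"
    and "\<alpha> 0 = \<alpha>\<^sub>0"
    and "\<forall>i\<le>k. \<alpha> (Suc i) = \<alpha> i * \<theta> ^ linesearch_j (\<lambda>z. A1 z + A2 z) A2 B \<theta> \<delta> (\<alpha> i) (x i)"
    and "\<forall>i\<le>k. x (Suc i) =
           proj (T_set (\<lambda>z. A1 z + A2 z) A2 B \<delta>' (\<alpha> (Suc i)) (x i) \<inter> Gamma_set (x 0) (x i)) (x 0)"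
    and "x (Suc k) = x k"
  shows "x k \<in> zer_sum (\<lambda>z. A1 z + A2 z) B"
proof -
  define A where "A = (\<lambda>z. A1 z + A2 z)"
  define T where "T i = T_set A A2 B \<delta>' (\<alpha> (Suc i)) (x i)" for i
  have A2_mono: "0 \<le> inner (A2 u - A2 w) (u - w)" for u w
    using assms(3) unfolding maximal_monotone_def monotone_op_def by blast
  have \<alpha>: "0 < \<alpha> i \<and> \<alpha> i \<le> \<alpha>\<^sub>0" if "i \<le> Suc k" for i
    using step_sizes_bounded[of \<theta> \<alpha> "Suc k" "\<lambda>i. linesearch_j A A2 B \<theta> \<delta> (\<alpha> i) (x i)" i]
      assms(7,8,13,15,16) that by (simp add: A_def)
  have zer_T: "zer_sum A B \<subseteq> T i" if "i \<le> k" for i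
    using zer_sum_subset_T_set[OF assms(1,2) A2_mono assms(5)] \<alpha>[of "Suc i"] that assms(14)
    by (simp add: A_def T_def)
  have "closed (T i) \<and> convex (T i)" for i unfolding T_def by (rule T_set_closed_convex)
  then have "x (Suc k) \<in> T k"
    by (rule hybrid_projection_mem[OF _ zer_T]) (use assms(6,17) in \<open>auto simp: A_def T_def\<close>)
  then have mem: "x k \<in> T_set A A2 B \<delta>' (\<alpha> k * \<theta> ^ linesearch_j A A2 B \<theta> \<delta> (\<alpha> k) (x k)) (x k)"
    using assms(16,18) unfolding T_def A_def by simp
  have "x k \<in> zer_sum A B"
    by (rule self_mem_T_set_imp_zer_sum[OF _ assms(7,8,9) _ assms(4,5) mem])
      (use \<alpha>[of k] assms(12) in auto)
  then show ?thesis by (simp add: A_def)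
qed

end
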